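(* Let $\mathbb{X}$ be a linearly ordered radicable idempotent semifield, $n\ge1$, $\bm{A}\in\mathbb{X}^{n\times n}$ with spectral radius $\lambda=\bigoplus_{k=1}^{n}(\mathrm{tr}\,\bm{A}^{k})^{1/k}$, $\bm{p},\bm{g}\in\mathbb{X}^n$, $\bm{q},\bm{h}\in\mathbb{X}^n$ regular vectors, and $r\in\mathbb{X}$, such that $\bm{h}^{-}\bm{g}\le\mathbb{1}$ and $\lambda\oplus(\bm{q}^{-}\bm{p})^{1/2}\oplus r>\mathbb{0}$. Consider minimizing $\bm{x}^{-}\bm{A}\bm{x}\oplus\bm{x}^{-}\bm{p}\oplus\bm{q}^{-}\bm{x}\oplus r$ over regular $\bm{x}\in\mathbb{X}^n$ subject to $\bm{g}\le\bm{x}\le\bm{h}$. Then the minimum value is $$\theta=\lambda\oplus\bigoplus_{k=1}^{n-1}(\bm{h}^{-}\bm{A}^{k}\bm{g})^{1/k}\oplus\bigoplus_{k=0}^{n-1}(\bm{q}^{-}\bm{A}^{k}\bm{g}\oplus\bm{h}^{-}\bm{A}^{k}\bm{p})^{1/(k+1)}\oplus\bigoplus_{k=0}^{n-1}(\bm{q}^{-}\bm{A}^{k}\bm{p})^{1/(k+2)}\oplus r,$$ and all regular solutions are exactly the vectors $\bm{x}=(\theta^{-1}\bm{A})^{\ast}\bm{u}$ with $\bm{u}$ any vector satisfying $\theta^{-1}\bm{p}\oplus\bm{g}\le\bm{u}\le\big((\theta^{-1}\bm{q}^{-}\oplus\bm{h}^{-})(\theta^{-1}\bm{A})^{\ast}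\big)^{-}$.
   Context: An idempotent semifield is $(\mathbb{X},\oplus,\otimes,\mathbb{0},\mathbb{1})$ where $(\mathbb{X},\oplus,\mathbb{0})$ is a commutative monoid with idempotent addition, $(\mathbb{X}\setminus\{\mathbb{0}\},\otimes,\mathbb{1})$ is an abelian group, and $\otimes$ distributes over $\oplus$; the product sign is omitted. The order is $x\le y$ iff $x\oplus y=y$, assumed linear; "minimum" refers to this order. Radicable means $x^m=a$ is solvable for all $a$ and integers $m\ge1$, so rational powers are defined. Matrix/vector operations use $\oplus,\otimes$; inequalities are entrywise. $\bm{I}$ is the identity matrix, $\bm{A}^0=\bm{I}$. A vector is regular if all entries are nonzero. For a nonzero vector $\bm{x}$, $\bm{x}^{-}$ is the transposed vector with entries $x_i^{-1}$ if $x_i\ne\mathbb{0}$ and $\mathbb{0}$ otherwise. $\mathrm{tr}\,\bm{A}=a_{11}\oplus\cdots\oplus a_{nn}$; $\bm{A}^{\ast}=\bm{I}\oplus\bm{A}\oplus\cdots\oplus\bm{A}^{n-1}$. *)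

theory Defs
  imports Main
begin

class idem_semifield = comm_semiring_1 + inverse + linorder +
  assumes add_idem: "x + x = x"
    and left_inverse_nz: "x \<noteq> 0 \<Longrightarrow> inverse x * x = 1"
    and inverse_zero_sf: "inverse 0 = 0"
    and le_iff_add: "x \<le> y \<longleftrightarrow> x + y = y"
    and radicable: "0 < m \<Longrightarrow> \<exists>y. y ^ m = a"

text \<open>Rational root a^(1/m) (unique in a linearly ordered radicable semifield).\<close>
definition rt :: "nat \<Rightarrow> 'a::idem_semifield \<Rightarrow> 'a" where
  "rt m a = (THE y. y ^ m = a)"

text \<open>Vectors and n x n matrices with entries indexed by 0..n-1.\<close>
definition idm :: "nat \<Rightarrow> nat \<Rightarrow> 'a::idem_semifield" where
  "idm i j = (if i = j then 1 else 0)"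

definition mmul :: "nat \<Rightarrow> (nat \<Rightarrow> nat \<Rightarrow> 'a::idem_semifield) \<Rightarrow> (nat \<Rightarrow> nat \<Rightarrow> 'a) \<Rightarrow> nat \<Rightarrow> nat \<Rightarrow> 'a" where
  "mmul n A B i j = (\<Sum>k<n. A i k * B k j)"

primrec mpow :: "nat \<Rightarrow> (nat \<Rightarrow> nat \<Rightarrow> 'a::idem_semifield) \<Rightarrow> nat \<Rightarrow> nat \<Rightarrow> nat \<Rightarrow> 'a" where
  "mpow n A 0 = idm"
| "mpow n A (Suc k) = mmul n A (mpow n A k)"

definition mvmul :: "nat \<Rightarrow> (nat \<Rightarrow> nat \<Rightarrow> 'a::idem_semifield) \<Rightarrow> (nat \<Rightarrow> 'a) \<Rightarrow> nat \<Rightarrow> 'a" where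
  "mvmul n A x i = (\<Sum>j<n. A i j * x j)"

definition vmmul :: "nat \<Rightarrow> (nat \<Rightarrow> 'a::idem_semifield) \<Rightarrow> (nat \<Rightarrow> nat \<Rightarrow> 'a) \<Rightarrow> nat \<Rightarrow> 'a" where
  "vmmul n y A j = (\<Sum>i<n. y i * A i j)"

definition vinner :: "nat \<Rightarrow> (nat \<Rightarrow> 'a::idem_semifield) \<Rightarrow> (nat \<Rightarrow> 'a) \<Rightarrow> 'a" where
  "vinner n y x = (\<Sum>i<n. y i * x i)"

text \<open>conjugate x^- (entries x_i^{-1} if nonzero, 0 otherwise; inverse 0 = 0)\<close>
definition vconj :: "(nat \<Rightarrow> 'a::idem_semifield) \<Rightarrow> nat \<Rightarrow> 'a" where
  "vconj x i = inverse (x i)"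

definition smul :: "'a::idem_semifield \<Rightarrow> (nat \<Rightarrow> nat \<Rightarrow> 'a) \<Rightarrow> nat \<Rightarrow> nat \<Rightarrow> 'a" where
  "smul c A i j = c * A i j"

definition tr :: "nat \<Rightarrow> (nat \<Rightarrow> nat \<Rightarrow> 'a::idem_semifield) \<Rightarrow> 'a" where
  "tr n A = (\<Sum>i<n. A i i)"

definition kstar :: "nat \<Rightarrow> (nat \<Rightarrow> nat \<Rightarrow> 'a::idem_semifield) \<Rightarrow> nat \<Rightarrow> nat \<Rightarrow> 'a" where
  "kstar n A i j = (\<Sum>k<n. mpow n A k i j)"

definition regular :: "nat \<Rightarrow> (nat \<Rightarrow> 'a::idem_semifield) \<Rightarrow> bool" where
  "regular n x \<longleftrightarrow> (\<forall>i<n. x i \<noteq> 0)"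

definition vle :: "nat \<Rightarrow> (nat \<Rightarrow> 'a::idem_semifield) \<Rightarrow> (nat \<Rightarrow> 'a) \<Rightarrow> bool" where
  "vle n x y \<longleftrightarrow> (\<forall>i<n. x i \<le> y i)"

definition spec_rad :: "nat \<Rightarrow> (nat \<Rightarrow> nat \<Rightarrow> 'a::idem_semifield) \<Rightarrow> 'a" where
  "spec_rad n A = (\<Sum>k\<in>{1..n}. rt k (tr n (mpow n A k)))"

definition objf :: "nat \<Rightarrow> (nat \<Rightarrow> nat \<Rightarrow> 'a::idem_semifield) \<Rightarrow> (nat \<Rightarrow> 'a) \<Rightarrow> (nat \<Rightarrow> 'a) \<Rightarrow> 'a \<Rightarrow> (nat \<Rightarrow> 'a) \<Rightarrow> 'a" where
  "objf n A p q r x = vinner n (vconj x) (mvmul n A x) + vinner n (vconj x) p + vinner n (vconj q) x + r"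

end

theory Submission
  imports Defs
begin

text \<open>Put \<open>B = \<theta>\<^sup>-\<^sup>1 A\<close>. The bound \<open>\<lambda> \<le> \<theta>\<close> says that every cycle of \<open>B\<close> has weight at most
  \<open>1\<close>; since a walk of length \<open>n\<close> on \<open>n\<close> vertices repeats a vertex and removing the cycle leaves a
  shorter walk, this gives \<open>B B\<^sup>* \<le> B\<^sup>*\<close>, so the solutions of \<open>A x \<le> \<theta> x\<close> are exactly the vectors
  \<open>B\<^sup>* u\<close>. Splitting the objective into its four terms, the part of the box where the objective
  is at most \<open>\<theta>\<close> becomes \<open>{B\<^sup>* u | \<theta>\<^sup>-\<^sup>1 p \<oplus> g \<le> u \<le> ((\<theta>\<^sup>-\<^sup>1 q\<^sup>- \<oplus> h\<^sup>-) B\<^sup>*)\<^sup>-}\<close>, and the remaining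
  terms of \<open>\<theta>\<close> are exactly what makes the lower bound on \<open>u\<close> lie below the upper one. Conversely,
  a feasible \<open>x\<close> with objective value \<open>\<mu>\<close> satisfies \<open>A x \<le> \<mu> x\<close>, \<open>p \<le> \<mu> x\<close> and \<open>q\<^sup>- x \<le> \<mu>\<close>; iterating
  these bounds shows that every term of \<open>\<theta>\<close> is at most \<open>\<mu>\<close>.\<close>

section \<open>Idempotent semifields as ordered semirings\<close>

context idem_semifield
begin

lemma add_eq_max: "x + y = max x y"
proof (cases "x \<le> y")
  case True
  then show ?thesis by (simp add: le_iff_add max_def)
next
  case False
  then have "y + x = x" by (simp add: le_iff_add[symmetric])
  with False show ?thesis by (simp add: add.commute max_def)
qed

subclass canonically_ordered_monoid_add
proof
  fix a b :: 'a
  show "a \<le> b \<longleftrightarrow> (\<exists>c. b = a + c)"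
    by (metis add_eq_max max.absorb2 max.cobounded1)
qed

subclass ordered_comm_semiring
proof
  fix a b c :: 'a
  assume "a \<le> b"
  then have "a + b = b"
    by (simp add: add_eq_max max.absorb2)
  have "c * a + c * b = c * (a + b)"
    by (rule distrib_left[symmetric])
  also have "\<dots> = c * b"
    using \<open>a + b = b\<close> by simp
  finally show "c * a \<le> c * b"
    by (simp add: add_eq_max max.absorb_iff2[symmetric])
qed

subclass semiring_1_no_zero_divisors
proof
  fix a b :: 'a
  assume a: "a \<noteq> 0" and "b \<noteq> 0"
  have "b = inverse a * (a * b)"
    by (simp add: mult.assoc[symmetric] left_inverse_nz[OF a])
  with \<open>b \<noteq> 0\<close> show "a * b \<noteq> 0" by (metis mult_zero_right)
qed

subclass ordered_semiring_1
  by standard (simp add: less_le)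

lemma add_le_iff: "x + y \<le> z \<longleftrightarrow> x \<le> z \<and> y \<le> z"
  by (simp add: add_eq_max)

lemma sum_le_iff: "finite S \<Longrightarrow> sum f S \<le> z \<longleftrightarrow> (\<forall>k\<in>S. f k \<le> z)"
  by (induction S rule: finite_induct) (auto simp: add_le_iff)

lemma sum_eq_Max: "finite S \<Longrightarrow> S \<noteq> {} \<Longrightarrow> sum f S = Max (f ` S)"
  by (induction S rule: finite_ne_induct) (auto simp: add_eq_max)

lemma right_inverse_nz: "x \<noteq> 0 \<Longrightarrow> x * inverse x = 1"
  using left_inverse_nz by (simp add: mult.commute)

lemma inverse_nonzero: "x \<noteq> 0 \<Longrightarrow> inverse x \<noteq> 0"
  using left_inverse_nz by (metis mult_zero_left zero_neq_one)

lemma inverse_one: "inverse 1 = 1"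
  using left_inverse_nz[of 1] by simp

lemma inverse_power: "inverse (c ^ k) = inverse c ^ k"
proof (cases "c = 0")
  case True
  then show ?thesis by (cases k) (simp_all add: inverse_one inverse_zero_sf)
next
  case False
  have ck: "c ^ k \<noteq> 0"
    using False by simp
  have "inverse (c ^ k) = inverse (c ^ k) * (inverse c * c) ^ k"
    by (simp add: left_inverse_nz[OF False])
  also have "\<dots> = inverse c ^ k * (inverse (c ^ k) * c ^ k)"
    by (simp add: power_mult_distrib mult_ac)
  also have "\<dots> = inverse c ^ k"
    by (simp add: left_inverse_nz[OF ck])
  finally show ?thesis .
qed

lemma mult_le_cancel_left_nz: "c \<noteq> 0 \<Longrightarrow> c * a \<le> c * b \<longleftrightarrow> a \<le> b"
proof
  assume c: "c \<noteq> 0" and "c * a \<le> c * b"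
  then have "inverse c * (c * a) \<le> inverse c * (c * b)"
    by (simp add: mult_left_mono)
  with c show "a \<le> b"
    by (simp add: mult.assoc[symmetric] left_inverse_nz)
qed (simp add: mult_left_mono)

lemma mult_le_iff: "c \<noteq> 0 \<Longrightarrow> c * a \<le> b \<longleftrightarrow> a \<le> inverse c * b"
  using mult_le_cancel_left_nz[of c a "inverse c * b"]
  by (simp add: mult.assoc[symmetric] right_inverse_nz)

lemma inverse_mult_le_iff: "c \<noteq> 0 \<Longrightarrow> inverse c * a \<le> b \<longleftrightarrow> a \<le> c * b"
  using mult_le_cancel_left_nz[of c "inverse c * a" b]
  by (simp add: mult.assoc[symmetric] right_inverse_nz)

lemma inverse_power_mult_le_one_iff: "c \<noteq> 0 \<Longrightarrow> inverse c ^ k * a \<le> 1 \<longleftrightarrow> a \<le> c ^ k"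
  using inverse_mult_le_iff[of "c ^ k" a 1] by (simp add: inverse_power)

lemma power_less_power: "a < b \<Longrightarrow> 0 < m \<Longrightarrow> a ^ m < b ^ m"
proof (induction m)
  case (Suc m)
  have "b ^ m \<noteq> 0"
    using Suc.prems(1) by (auto simp: less_le)
  have "a * a ^ m \<le> a * b ^ m"
    using Suc by (cases "m = 0") (simp_all add: mult_left_mono less_imp_le)
  also have "\<dots> < b * b ^ m"
    using Suc.prems mult_le_cancel_left_nz[OF \<open>b ^ m \<noteq> 0\<close>, of b a]
    by (simp add: mult.commute not_le[symmetric])
  finally show ?case by simp
qed simp

lemma power_le_power_iff: "0 < m \<Longrightarrow> a ^ m \<le> b ^ m \<longleftrightarrow> a \<le> b"
  by (meson power_less_power power_mono zero_le not_le)

end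

lemma rt_power: "0 < m \<Longrightarrow> rt m (a::'a::idem_semifield) ^ m = a"
proof -
  assume m: "0 < m"
  obtain y where "y ^ m = a"
    using radicable[OF m] by blast
  moreover have "z = y" if "z ^ m = a" for z
    using that \<open>y ^ m = a\<close> power_le_power_iff[OF m] by (metis order.antisym order_refl)
  ultimately have "\<exists>!y. y ^ m = a" by blast
  then show ?thesis
    unfolding rt_def by (rule theI')
qed

lemma rt_le_iff: "0 < m \<Longrightarrow> rt m (a::'a::idem_semifield) \<le> c \<longleftrightarrow> a \<le> c ^ m"
  using power_le_power_iff[of m "rt m a" c] by (simp add: rt_power)

section \<open>Matrix and vector algebra\<close>

lemma mvmul_idm: "i < n \<Longrightarrow> mvmul n idm x i = x i"
proof -
  assume "i < n"
  have "mvmul n idm x i = (\<Sum>j<n. if i = j then x j else 0)"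
    unfolding mvmul_def idm_def by (rule sum.cong) auto
  with \<open>i < n\<close> show ?thesis by simp
qed

lemma mvmul_mmul: "mvmul n (mmul n A M) x i = mvmul n A (mvmul n M x) i"
proof -
  have "mvmul n (mmul n A M) x i = (\<Sum>j<n. \<Sum>k<n. A i k * (M k j * x j))"
    unfolding mvmul_def mmul_def by (simp add: sum_distrib_right mult.assoc)
  also have "\<dots> = (\<Sum>k<n. \<Sum>j<n. A i k * (M k j * x j))"
    by (rule sum.swap)
  also have "\<dots> = mvmul n A (mvmul n M x) i"
    unfolding mvmul_def by (simp add: sum_distrib_left)
  finally show ?thesis .
qed

lemma vinner_mvmul: "vinner n w (mvmul n M x) = vinner n (vmmul n w M) x"
proof -
  have "vinner n w (mvmul n M x) = (\<Sum>i<n. \<Sum>j<n. w i * M i j * x j)"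
    unfolding vinner_def mvmul_def by (simp add: sum_distrib_left mult.assoc)
  also have "\<dots> = (\<Sum>j<n. \<Sum>i<n. w i * M i j * x j)"
    by (rule sum.swap)
  also have "\<dots> = vinner n (vmmul n w M) x"
    unfolding vinner_def vmmul_def by (simp add: sum_distrib_right)
  finally show ?thesis .
qed

lemma mvmul_cong: "(\<And>j. j < n \<Longrightarrow> x j = y j) \<Longrightarrow> mvmul n M x i = mvmul n M y i"
  unfolding mvmul_def by (rule sum.cong) auto

lemma vinner_cong: "(\<And>j. j < n \<Longrightarrow> x j = y j) \<Longrightarrow> vinner n w x = vinner n w y"
  unfolding vinner_def by (rule sum.cong) auto

lemma mvmul_mono: "(\<And>j. j < n \<Longrightarrow> x j \<le> y j) \<Longrightarrow> mvmul n M x i \<le> mvmul n M y i"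
  unfolding mvmul_def by (rule sum_mono) (simp add: mult_left_mono)

lemma mvmul_mono_matrix: "(\<And>j. j < n \<Longrightarrow> M i j \<le> N i j) \<Longrightarrow> mvmul n M x i \<le> mvmul n N x i"
  unfolding mvmul_def by (rule sum_mono) (simp add: mult_right_mono)

lemma vinner_mono: "(\<And>j. j < n \<Longrightarrow> x j \<le> y j) \<Longrightarrow> vinner n w x \<le> vinner n w y"
  unfolding vinner_def by (rule sum_mono) (simp add: mult_left_mono)

lemma mvmul_scale: "mvmul n M (\<lambda>j. c * x j) = (\<lambda>i. c * mvmul n M x i)"
  unfolding mvmul_def by (simp add: sum_distrib_left mult.left_commute)

lemma mvmul_add: "mvmul n M (\<lambda>j. x j + y j) = (\<lambda>i. mvmul n M x i + mvmul n M y i)"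
  unfolding mvmul_def by (simp add: distrib_left sum.distrib)

lemma vinner_scale_left: "vinner n (\<lambda>i. c * w i) x = c * vinner n w x"
  unfolding vinner_def by (simp add: sum_distrib_left mult.assoc)

lemma vinner_scale_right: "vinner n w (\<lambda>i. c * x i) = c * vinner n w x"
  unfolding vinner_def by (simp add: sum_distrib_left mult.left_commute)

lemma vinner_add_left: "vinner n (\<lambda>i. v i + w i) x = vinner n v x + vinner n w x"
  unfolding vinner_def by (simp add: distrib_right sum.distrib)

lemma vinner_add_right: "vinner n w (\<lambda>i. x i + y i) = vinner n w x + vinner n w y"
  unfolding vinner_def by (simp add: distrib_left sum.distrib)

lemma vinner_sum_right: "vinner n w (\<lambda>i. \<Sum>k\<in>S. f k i) = (\<Sum>k\<in>S. vinner n w (f k))"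
  unfolding vinner_def by (simp add: sum_distrib_left sum.swap[of _ S])

lemma vinner_le_iff: "vinner n w x \<le> c \<longleftrightarrow> (\<forall>i<n. w i * x i \<le> c)"
  unfolding vinner_def by (auto simp: sum_le_iff)

lemma mpow_smul: "mpow n (smul c A) k i j = c ^ k * mpow n A k i j"
  by (induction k arbitrary: i j) (simp_all add: mmul_def smul_def sum_distrib_left mult_ac)

lemma mvmul_mpow_smul: "mvmul n (mpow n (smul c A) k) x i = c ^ k * mvmul n (mpow n A k) x i"
  unfolding mvmul_def by (simp add: mpow_smul sum_distrib_left mult.assoc)

lemma tr_mpow_smul: "tr n (mpow n (smul c A) k) = c ^ k * tr n (mpow n A k)"
  unfolding tr_def by (simp add: mpow_smul sum_distrib_left)

lemma regular_vconj: "regular n x \<Longrightarrow> regular n (vconj x)"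
  by (simp add: regular_def vconj_def inverse_nonzero)

lemma vinner_vconj_le_iff:
  assumes "regular n x"
  shows "vinner n (vconj x) y \<le> \<mu> \<longleftrightarrow> (\<forall>i<n. y i \<le> \<mu> * x i)"
proof -
  have "inverse (x i) * y i \<le> \<mu> \<longleftrightarrow> y i \<le> \<mu> * x i" if "i < n" for i
    using assms that inverse_mult_le_iff[of "x i" "y i" \<mu>] by (simp add: regular_def mult.commute)
  then show ?thesis
    by (simp add: vinner_le_iff vconj_def)
qed

lemma vle_iff_vinner_vconj_le_one: "regular n h \<Longrightarrow> vle n x h \<longleftrightarrow> vinner n (vconj h) x \<le> 1"
  by (simp add: vle_def vinner_vconj_le_iff)

lemma vle_vconj_iff_vinner_le_one: "regular n w \<Longrightarrow> vle n x (vconj w) \<longleftrightarrow> vinner n w x \<le> 1"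
  by (simp add: regular_def vle_def vinner_le_iff vconj_def mult_le_iff)

lemma mpow_le_kstar: "k < n \<Longrightarrow> mpow n B k i j \<le> kstar n B i j"
  unfolding kstar_def by (rule member_le_sum) auto

lemma one_le_kstar_diag: "1 \<le> n \<Longrightarrow> 1 \<le> kstar n B i i"
  using mpow_le_kstar[of 0 n B i i] by (simp add: idm_def)

lemma le_mvmul_kstar: "1 \<le> n \<Longrightarrow> i < n \<Longrightarrow> u i \<le> mvmul n (kstar n B) u i"
proof -
  assume "1 \<le> n" "i < n"
  then have "u i \<le> kstar n B i i * u i"
    using mult_right_mono[OF one_le_kstar_diag[of n B i], of "u i"] by simp
  also have "\<dots> \<le> mvmul n (kstar n B) u i"
    unfolding mvmul_def using \<open>i < n\<close> by (intro member_le_sum) auto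
  finally show ?thesis .
qed

lemma mvmul_kstar: "mvmul n (kstar n B) x i = (\<Sum>k<n. mvmul n (mpow n B k) x i)"
proof -
  have "mvmul n (kstar n B) x i = (\<Sum>j<n. \<Sum>k<n. mpow n B k i j * x j)"
    unfolding mvmul_def kstar_def by (simp add: sum_distrib_right)
  also have "\<dots> = (\<Sum>k<n. mvmul n (mpow n B k) x i)"
    unfolding mvmul_def by (rule sum.swap)
  finally show ?thesis .
qed

lemma mmul_kstar: "mmul n B (kstar n B) i j = (\<Sum>k<n. mpow n B (Suc k) i j)"
proof -
  have "mmul n B (kstar n B) i j = (\<Sum>l<n. \<Sum>k<n. B i l * mpow n B k l j)"
    unfolding mmul_def kstar_def by (simp add: sum_distrib_left)
  also have "\<dots> = (\<Sum>k<n. mpow n B (Suc k) i j)"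
    by (subst sum.swap) (simp add: mmul_def)
  finally show ?thesis .
qed

section \<open>Walks and the Kleene star\<close>

definition walk_weight :: "(nat \<Rightarrow> nat \<Rightarrow> 'a::idem_semifield) \<Rightarrow> (nat \<Rightarrow> nat) \<Rightarrow> nat \<Rightarrow> 'a" where
  "walk_weight B v m = (\<Prod>t<m. B (v t) (v (Suc t)))"

lemma walk_weight_Suc: "walk_weight B v (Suc m) = B (v 0) (v 1) * walk_weight B (\<lambda>t. v (Suc t)) m"
  unfolding walk_weight_def by (subst prod.lessThan_Suc_shift) simp

lemma walk_weight_le_mpow:
  "(\<And>t. t \<le> m \<Longrightarrow> v t < n) \<Longrightarrow> walk_weight B v m \<le> mpow n B m (v 0) (v m)"
proof (induction m arbitrary: v)
  case 0
  then show ?case by (simp add: walk_weight_def idm_def)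
next
  case (Suc m)
  have "walk_weight B v (Suc m) \<le> B (v 0) (v 1) * mpow n B m (v 1) (v (Suc m))"
    unfolding walk_weight_Suc using Suc.IH[of "\<lambda>t. v (Suc t)"] Suc.prems
    by (simp add: mult_left_mono)
  also have "\<dots> \<le> mpow n B (Suc m) (v 0) (v (Suc m))"
    unfolding mpow.simps mmul_def using Suc.prems[of 1]
    by (intro member_le_sum[where f = "\<lambda>l. B (v 0) l * mpow n B m l (v (Suc m))"]) auto
  finally show ?case .
qed

text \<open>In an idempotent semifield every sum is a maximum, so an entry of \<open>B^m\<close> is the
  weight of a single walk of length \<open>m\<close>.\<close>

lemma mpow_eq_walk_weight:
  assumes "i < n" "j < n" "mpow n B m i j \<noteq> 0"
  shows "\<exists>v. v 0 = i \<and> v m = j \<and> (\<forall>t\<le>m. v t < n) \<and> mpow n B m i j = walk_weight B v m"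
  using assms(1,3)
proof (induction m arbitrary: i)
  case 0
  then show ?case
    by (intro exI[of _ "\<lambda>_. i"]) (auto simp: walk_weight_def idm_def split: if_splits)
next
  case (Suc m)
  let ?f = "\<lambda>l. B i l * mpow n B m l j"
  have "mpow n B (Suc m) i j = Max (?f ` {..<n})"
    using assms(2) by (auto simp: mmul_def intro: sum_eq_Max)
  moreover have "Max (?f ` {..<n}) \<in> ?f ` {..<n}"
    using assms(2) by (intro Max_in) auto
  ultimately obtain l where l: "l < n" "mpow n B (Suc m) i j = B i l * mpow n B m l j"
    by auto
  with Suc.prems(2) have "mpow n B m l j \<noteq> 0" by auto
  then obtain v where v: "v 0 = l" "v m = j" "\<forall>t\<le>m. v t < n" "mpow n B m l j = walk_weight B v m"
    using Suc.IH[OF l(1)] by blast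
  define v' where "v' t = (if t = 0 then i else v (t - 1))" for t
  have "(\<lambda>t. v' (Suc t)) = v" by (simp add: v'_def)
  then have "walk_weight B v' (Suc m) = B i l * walk_weight B v m"
    unfolding walk_weight_Suc using v(1) by (simp add: v'_def)
  moreover have "\<forall>t\<le>Suc m. v' t < n"
    using v(3) Suc.prems(1) by (simp add: v'_def)
  moreover have "v' 0 = i" "v' (Suc m) = j"
    using v(2) by (simp_all add: v'_def)
  ultimately show ?case
    using l v(4) by (intro exI[of _ v']) simp
qed

lemma walk_weight_remove_cycle:
  assumes "a < c" "c \<le> m" "v a = v c"
  shows "walk_weight B v m =
    walk_weight B (\<lambda>t. if t < a then v t else v (t + (c - a))) (m - (c - a))
    * walk_weight B (\<lambda>t. v (t + a)) (c - a)"
proof -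
  define s where "s = c - a"
  define v' where "v' = (\<lambda>t. if t < a then v t else v (t + s))"
  define f where "f t = B (v t) (v (Suc t))" for t
  define g where "g t = B (v' t) (v' (Suc t))" for t
  have g_eq: "g t = (if t < a then f t else f (t + s))" for t
  proof (cases "Suc t = a")
    case True
    then show ?thesis
      using assms by (simp add: g_def v'_def f_def s_def)
  qed (auto simp: g_def v'_def f_def)
  have "walk_weight B v' (m - s) = prod g {0..<a} * prod g {a..<m - s}"
    unfolding walk_weight_def lessThan_atLeast0 g_def
    by (rule prod.atLeastLessThan_concat[symmetric]) (use assms in \<open>simp_all add: s_def\<close>)
  also have "prod g {0..<a} = prod f {0..<a}"
    by (rule prod.cong) (simp_all add: g_eq)
  also have "prod g {a..<m - s} = prod (\<lambda>t. f (t + s)) {a..<m - s}"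
    by (rule prod.cong) (simp_all add: g_eq)
  also have "\<dots> = prod f {c..<m}"
    using prod.shift_bounds_nat_ivl[of f a s "m - s"] assms by (simp add: s_def)
  finally have contracted: "walk_weight B v' (m - s) = prod f {0..<a} * prod f {c..<m}" .
  have cycle: "walk_weight B (\<lambda>t. v (t + a)) s = prod f {a..<c}"
    unfolding walk_weight_def lessThan_atLeast0 f_def
    using prod.shift_bounds_nat_ivl[of "\<lambda>t. B (v t) (v (Suc t))" 0 a s] assms
    by (simp add: s_def add.commute)
  have "walk_weight B v m = prod f {0..<c} * prod f {c..<m}"
    unfolding walk_weight_def lessThan_atLeast0 f_def[symmetric]
    by (rule prod.atLeastLessThan_concat[symmetric]) (use assms in simp_all)
  also have "prod f {0..<c} = prod f {0..<a} * prod f {a..<c}"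
    by (rule prod.atLeastLessThan_concat[symmetric]) (use assms in simp_all)
  finally show ?thesis
    using contracted cycle unfolding v'_def s_def by (simp add: mult_ac)
qed

lemma walk_repeats_vertex:
  fixes v :: "nat \<Rightarrow> nat"
  assumes "\<forall>t\<le>n. v t < n"
  shows "\<exists>a c. a < c \<and> c \<le> n \<and> v a = v c"
proof -
  have "v ` {0..n} \<subseteq> {..<n}"
    using assms by auto
  then have "card (v ` {0..n}) < card {0..n}"
    using card_mono[of "{..<n}" "v ` {0..n}"] by simp
  then have "\<not> inj_on v {0..n}"
    using card_image by (metis order.irrefl)
  then obtain a c where "a \<le> n" "c \<le> n" "a \<noteq> c" "v a = v c"
    unfolding inj_on_def by auto
  then show ?thesis
    by (metis linorder_neq_iff)
qed

lemma mpow_le_kstar_if_tr_le_one: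
  assumes tr: "\<forall>k\<in>{1..n}. tr n (mpow n B k) \<le> 1" and "i < n" "j < n"
  shows "mpow n B n i j \<le> kstar n B i j"
proof (cases "mpow n B n i j = 0")
  case False
  then obtain v where v: "v 0 = i" "v n = j" "\<forall>t\<le>n. v t < n" "mpow n B n i j = walk_weight B v n"
    using mpow_eq_walk_weight[OF \<open>i < n\<close> \<open>j < n\<close>] by blast
  then obtain a c where ac: "a < c" "c \<le> n" "v a = v c"
    using walk_repeats_vertex by blast
  define s where "s = c - a"
  define v' where "v' = (\<lambda>t. if t < a then v t else v (t + s))"
  have "s \<in> {1..n}"
    using ac by (auto simp: s_def)
  have "walk_weight B (\<lambda>t. v (t + a)) s \<le> mpow n B s (v a) (v c)"
    using walk_weight_le_mpow[of s "\<lambda>t. v (t + a)" n B] v(3) ac by (simp add: s_def add.commute)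
  also have "\<dots> \<le> tr n (mpow n B s)"
    unfolding tr_def \<open>v a = v c\<close>[symmetric] using ac v(3)
    by (intro member_le_sum[where f = "\<lambda>l. mpow n B s l l"]) auto
  also have "\<dots> \<le> 1"
    using tr \<open>s \<in> {1..n}\<close> by blast
  finally have cycle: "walk_weight B (\<lambda>t. v (t + a)) s \<le> 1" .
  have "mpow n B n i j = walk_weight B v' (n - s) * walk_weight B (\<lambda>t. v (t + a)) s"
    using walk_weight_remove_cycle[OF ac, of B] v(4) unfolding v'_def s_def by simp
  also have "\<dots> \<le> walk_weight B v' (n - s)"
    using mult_left_mono[OF cycle] by simp
  also have "\<dots> \<le> mpow n B (n - s) i j"
  proof -
    have "v' t < n" if "t \<le> n - s" for t
      using that v(3) ac by (auto simp: v'_def s_def)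
    moreover have "v' 0 = i" "v' (n - s) = j"
      using v(1,2) ac by (auto simp: v'_def s_def)
    ultimately show ?thesis
      using walk_weight_le_mpow[of "n - s" v' n B] by simp
  qed
  also have "\<dots> \<le> kstar n B i j"
    using ac by (intro mpow_le_kstar) (simp add: s_def)
  finally show ?thesis .
qed simp

lemma mmul_kstar_le_kstar:
  assumes "\<forall>k\<in>{1..n}. tr n (mpow n B k) \<le> 1" and "i < n" "j < n"
  shows "mmul n B (kstar n B) i j \<le> kstar n B i j"
  unfolding mmul_kstar sum_le_iff[OF finite_lessThan]
proof
  fix k assume "k \<in> {..<n}"
  then consider "Suc k < n" | "Suc k = n" by fastforce
  then show "mpow n B (Suc k) i j \<le> kstar n B i j"
    by cases (use mpow_le_kstar[of "Suc k" n B i j] mpow_le_kstar_if_tr_le_one[OF assms] in auto)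
qed

section \<open>Sub-eigenvectors\<close>

lemma mvmul_smul: "mvmul n (smul c A) x i = c * mvmul n A x i"
  unfolding mvmul_def smul_def by (simp add: sum_distrib_left mult.assoc)

lemma mvmul_mpow_le:
  assumes "\<forall>i<n. mvmul n A x i \<le> \<mu> * x i" and "i < n"
  shows "mvmul n (mpow n A k) x i \<le> \<mu> ^ k * x i"
  using \<open>i < n\<close>
proof (induction k arbitrary: i)
  case 0
  then show ?case by (simp add: mvmul_idm)
next
  case (Suc k)
  have "mvmul n (mpow n A (Suc k)) x i = mvmul n A (mvmul n (mpow n A k) x) i"
    by (simp add: mvmul_mmul)
  also have "\<dots> \<le> mvmul n A (\<lambda>j. \<mu> ^ k * x j) i"
    using Suc.IH by (intro mvmul_mono)
  also have "\<dots> \<le> \<mu> ^ k * (\<mu> * x i)"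
    using assms(1) Suc.prems by (simp add: mvmul_scale mult_left_mono)
  finally show ?case by (simp add: mult_ac)
qed

lemma tr_mpow_le:
  assumes "\<forall>i<n. mvmul n A x i \<le> \<mu> * x i" and "regular n x"
  shows "tr n (mpow n A k) \<le> \<mu> ^ k"
  unfolding tr_def sum_le_iff[OF finite_lessThan]
proof
  fix i assume "i \<in> {..<n}"
  then have i: "i < n" by simp
  have "x i * mpow n A k i i \<le> mvmul n (mpow n A k) x i"
    unfolding mvmul_def using i
    by (subst mult.commute) (intro member_le_sum[where f = "\<lambda>j. mpow n A k i j * x j"], auto)
  also have "\<dots> \<le> x i * \<mu> ^ k"
    using mvmul_mpow_le[OF assms(1) i] by (simp add: mult.commute)
  finally show "mpow n A k i i \<le> \<mu> ^ k"
    using assms(2) i by (simp add: regular_def mult_le_cancel_left_nz)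
qed

lemma vinner_mpow_le:
  assumes "\<forall>i<n. mvmul n A x i \<le> \<mu> * x i" and "\<forall>j<n. y j \<le> c * x j" and "vinner n w x \<le> e"
  shows "vinner n w (mvmul n (mpow n A k) y) \<le> \<mu> ^ k * c * e"
proof -
  have "vinner n w (mvmul n (mpow n A k) y) \<le> vinner n w (\<lambda>i. (c * \<mu> ^ k) * x i)"
  proof (rule vinner_mono)
    fix i assume i: "i < n"
    have "mvmul n (mpow n A k) y i \<le> mvmul n (mpow n A k) (\<lambda>j. c * x j) i"
      using assms(2) by (intro mvmul_mono) auto
    also have "\<dots> \<le> c * (\<mu> ^ k * x i)"
      using mvmul_mpow_le[OF assms(1) i] by (simp add: mvmul_scale mult_left_mono)
    finally show "mvmul n (mpow n A k) y i \<le> (c * \<mu> ^ k) * x i"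
      by (simp add: mult_ac)
  qed
  also have "\<dots> \<le> (c * \<mu> ^ k) * e"
    using assms(3) by (simp add: vinner_scale_right mult_left_mono)
  finally show ?thesis by (simp add: mult_ac)
qed

lemma mvmul_kstar_eq_if_subeigen:
  assumes "\<forall>i<n. mvmul n A x i \<le> \<theta> * x i" and "\<theta> \<noteq> 0" "1 \<le> n" "i < n"
  shows "mvmul n (kstar n (smul (inverse \<theta>) A)) x i = x i"
proof (rule order.antisym)
  show "mvmul n (kstar n (smul (inverse \<theta>) A)) x i \<le> x i"
    unfolding mvmul_kstar mvmul_mpow_smul sum_le_iff[OF finite_lessThan]
    using mvmul_mpow_le[OF assms(1,4)] assms(2)
    by (simp add: inverse_power[symmetric] inverse_mult_le_iff)
qed (use le_mvmul_kstar assms(3,4) in blast)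

lemma subeigen_mvmul_kstar:
  assumes "\<forall>k\<in>{1..n}. tr n (mpow n A k) \<le> \<theta> ^ k" and "\<theta> \<noteq> 0" "i < n"
  shows "mvmul n A (mvmul n (kstar n (smul (inverse \<theta>) A)) u) i
    \<le> \<theta> * mvmul n (kstar n (smul (inverse \<theta>) A)) u i"
proof -
  define B where "B = smul (inverse \<theta>) A"
  have "\<forall>k\<in>{1..n}. tr n (mpow n B k) \<le> 1"
    using assms(1,2) by (simp add: B_def tr_mpow_smul inverse_power_mult_le_one_iff)
  then have "mvmul n (mmul n B (kstar n B)) u i \<le> mvmul n (kstar n B) u i"
    using \<open>i < n\<close> by (intro mvmul_mono_matrix mmul_kstar_le_kstar)
  then have "inverse \<theta> * mvmul n A (mvmul n (kstar n B) u) i \<le> mvmul n (kstar n B) u i"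
    by (simp add: mvmul_mmul B_def mvmul_smul)
  then show ?thesis
    using assms(2) by (simp add: B_def inverse_mult_le_iff)
qed

section \<open>The optimization problem\<close>

lemma objf_le_iff:
  assumes "regular n x"
  shows "objf n A p q r x \<le> \<mu> \<longleftrightarrow>
    (\<forall>i<n. mvmul n A x i \<le> \<mu> * x i) \<and> (\<forall>i<n. p i \<le> \<mu> * x i)
    \<and> vinner n (vconj q) x \<le> \<mu> \<and> r \<le> \<mu>"
  using assms by (simp add: objf_def add_le_iff vinner_vconj_le_iff)

definition opt_value ::
  "nat \<Rightarrow> (nat \<Rightarrow> nat \<Rightarrow> 'a::idem_semifield) \<Rightarrow> (nat \<Rightarrow> 'a) \<Rightarrow> (nat \<Rightarrow> 'a) \<Rightarrow> 'a
    \<Rightarrow> (nat \<Rightarrow> 'a) \<Rightarrow> (nat \<Rightarrow> 'a) \<Rightarrow> 'a" where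
  "opt_value n A p q r g h = spec_rad n A
      + (\<Sum>k\<in>{1..<n}. rt k (vinner n (vconj h) (mvmul n (mpow n A k) g)))
      + (\<Sum>k<n. rt (k + 1) (vinner n (vconj q) (mvmul n (mpow n A k) g)
                              + vinner n (vconj h) (mvmul n (mpow n A k) p)))
      + (\<Sum>k<n. rt (k + 2) (vinner n (vconj q) (mvmul n (mpow n A k) p)))
      + r"

lemma opt_value_le_iff:
  "opt_value n A p q r g h \<le> \<mu> \<longleftrightarrow>
    (\<forall>k\<in>{1..n}. tr n (mpow n A k) \<le> \<mu> ^ k)
    \<and> (\<forall>k\<in>{1..<n}. vinner n (vconj h) (mvmul n (mpow n A k) g) \<le> \<mu> ^ k)
    \<and> (\<forall>k<n. vinner n (vconj q) (mvmul n (mpow n A k) g) \<le> \<mu> ^ (k + 1)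
            \<and> vinner n (vconj h) (mvmul n (mpow n A k) p) \<le> \<mu> ^ (k + 1))
    \<and> (\<forall>k<n. vinner n (vconj q) (mvmul n (mpow n A k) p) \<le> \<mu> ^ (k + 2))
    \<and> r \<le> \<mu>"
  unfolding opt_value_def spec_rad_def
  by (simp add: add_le_iff sum_le_iff rt_le_iff Suc_le_eq Ball_def)

lemma opt_value_le_objf:
  assumes "regular n h" "regular n x" "vle n g x" "vle n x h"
  shows "opt_value n A p q r g h \<le> objf n A p q r x"
proof -
  define \<mu> where "\<mu> = objf n A p q r x"
  have A: "\<forall>i<n. mvmul n A x i \<le> \<mu> * x i" and p: "\<forall>i<n. p i \<le> \<mu> * x i"
    and q: "vinner n (vconj q) x \<le> \<mu>" and r: "r \<le> \<mu>"
    using objf_le_iff[OF assms(2), of A p q r \<mu>] by (simp_all add: \<mu>_def)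
  have g: "\<forall>j<n. g j \<le> 1 * x j"
    using assms(3) by (simp add: vle_def)
  have h: "vinner n (vconj h) x \<le> 1"
    using assms(1,4) by (simp add: vle_iff_vinner_vconj_le_one)
  have "opt_value n A p q r g h \<le> \<mu>"
    unfolding opt_value_le_iff
    using tr_mpow_le[OF A assms(2)] vinner_mpow_le[OF A g h] vinner_mpow_le[OF A g q]
      vinner_mpow_le[OF A p h] vinner_mpow_le[OF A p q] r
    by (simp add: mult_ac power_add power2_eq_square)
  then show ?thesis by (simp add: \<mu>_def)
qed

lemma spec_rad_le_opt_value:
  assumes "1 \<le> n"
  shows "spec_rad n A + rt 2 (vinner n (vconj q) p) + r \<le> opt_value n A p q r g h"
proof -
  have "vinner n (vconj q) (mvmul n (mpow n A 0) p) = vinner n (vconj q) p"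
    by (rule vinner_cong) (simp add: mvmul_idm)
  then have "rt 2 (vinner n (vconj q) p)
      \<le> (\<Sum>k<n. rt (k + 2) (vinner n (vconj q) (mvmul n (mpow n A k) p)))"
    using assms member_le_sum[of 0 "{..<n}" "\<lambda>k. rt (k + 2) (vinner n (vconj q) (mvmul n (mpow n A k) p))"]
    by (simp add: numeral_2_eq_2)
  also have "\<dots> \<le> opt_value n A p q r g h"
    unfolding opt_value_def by (simp add: add_eq_max le_max_iff_disj)
  finally show ?thesis
    unfolding add_le_iff opt_value_def by (simp add: add_eq_max le_max_iff_disj)
qed

lemma regular_add_right: "regular n w \<Longrightarrow> regular n (\<lambda>i. v i + w i)"
  by (simp add: regular_def)

lemma regular_mvmul_kstar: "1 \<le> n \<Longrightarrow> regular n u \<Longrightarrow> regular n (mvmul n (kstar n B) u)"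
  unfolding regular_def by (metis le_mvmul_kstar order.antisym zero_le)

lemma regular_vmmul_kstar: "1 \<le> n \<Longrightarrow> regular n d \<Longrightarrow> regular n (vmmul n d (kstar n B))"
  unfolding regular_def
proof (intro allI impI)
  fix j assume "1 \<le> n" "\<forall>i<n. d i \<noteq> 0" "j < n"
  have "d j \<le> d j * kstar n B j j"
    using mult_left_mono[OF one_le_kstar_diag[OF \<open>1 \<le> n\<close>]] by simp
  also have "\<dots> \<le> vmmul n d (kstar n B) j"
    unfolding vmmul_def using \<open>j < n\<close> by (intro member_le_sum[where f = "\<lambda>i. d i * kstar n B i j"]) auto
  finally show "vmmul n d (kstar n B) j \<noteq> 0"
    using \<open>\<forall>i<n. d i \<noteq> 0\<close> \<open>j < n\<close> by (metis order.antisym zero_le)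
qed

lemma sublevel_set_eq_kstar_image:
  fixes A :: "nat \<Rightarrow> nat \<Rightarrow> 'a::idem_semifield"
  assumes "1 \<le> n" "regular n h" "\<theta> \<noteq> 0" "opt_value n A p q r g h \<le> \<theta>" "regular n x"
  shows "(vle n g x \<and> vle n x h \<and> objf n A p q r x \<le> \<theta>) \<longleftrightarrow>
    (\<exists>u. vle n (\<lambda>i. inverse \<theta> * p i + g i) u
       \<and> vle n u (vconj (vmmul n (\<lambda>i. inverse \<theta> * vconj q i + vconj h i)
                                (kstar n (smul (inverse \<theta>) A))))
       \<and> (\<forall>i<n. x i = mvmul n (kstar n (smul (inverse \<theta>) A)) u i))"
proof -
  define K where "K = kstar n (smul (inverse \<theta>) A)"
  define b where "b i = inverse \<theta> * p i + g i" for i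
  define d where "d i = inverse \<theta> * vconj q i + vconj h i" for i
  have tr: "\<forall>k\<in>{1..n}. tr n (mpow n A k) \<le> \<theta> ^ k" and "r \<le> \<theta>"
    using assms(4) by (simp_all add: opt_value_le_iff)
  have dK: "regular n (vmmul n d K)"
    unfolding K_def d_def using assms(1,2) by (intro regular_vmmul_kstar regular_add_right regular_vconj)
  have b_le: "vle n b y \<longleftrightarrow> vle n g y \<and> (\<forall>i<n. p i \<le> \<theta> * y i)" for y
    using assms(3) by (auto simp: vle_def b_def add_le_iff inverse_mult_le_iff)
  have d_le: "vinner n d y \<le> 1 \<longleftrightarrow> vle n y h \<and> vinner n (vconj q) y \<le> \<theta>" for y
    using assms(2,3) unfolding d_def
    by (auto simp: vinner_add_left vinner_scale_left add_le_iff inverse_mult_le_iff vle_iff_vinner_vconj_le_one)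
  have "(vle n g x \<and> vle n x h \<and> objf n A p q r x \<le> \<theta>) \<longleftrightarrow>
      vle n b x \<and> vinner n d x \<le> 1 \<and> (\<forall>i<n. mvmul n A x i \<le> \<theta> * x i)"
    using \<open>r \<le> \<theta>\<close> by (auto simp: objf_le_iff[OF assms(5)] b_le d_le)
  also have "\<dots> \<longleftrightarrow> (\<exists>u. vle n b u \<and> vle n u (vconj (vmmul n d K)) \<and> (\<forall>i<n. x i = mvmul n K u i))"
  proof
    assume x: "vle n b x \<and> vinner n d x \<le> 1 \<and> (\<forall>i<n. mvmul n A x i \<le> \<theta> * x i)"
    then have Kx: "\<forall>i<n. x i = mvmul n K x i"
      using mvmul_kstar_eq_if_subeigen[of n A x \<theta>] assms(1,3) by (simp add: K_def)
    have "vinner n (vmmul n d K) x = vinner n d (mvmul n K x)"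
      by (simp add: vinner_mvmul)
    also have "\<dots> = vinner n d x"
      using Kx by (intro vinner_cong) simp
    finally have "vle n x (vconj (vmmul n d K))"
      using x dK by (simp add: vle_vconj_iff_vinner_le_one)
    with x Kx show "\<exists>u. vle n b u \<and> vle n u (vconj (vmmul n d K)) \<and> (\<forall>i<n. x i = mvmul n K u i)"
      by blast
  next
    assume "\<exists>u. vle n b u \<and> vle n u (vconj (vmmul n d K)) \<and> (\<forall>i<n. x i = mvmul n K u i)"
    then obtain u where bu: "vle n b u" and ud: "vle n u (vconj (vmmul n d K))"
      and xu: "\<forall>i<n. x i = mvmul n K u i" by blast
    have "vle n u x"
      using xu assms(1) by (simp add: vle_def K_def le_mvmul_kstar)
    with bu have "vle n b x"
      by (auto simp: vle_def intro: order_trans)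
    moreover have "vinner n d x = vinner n d (mvmul n K u)"
      using xu by (intro vinner_cong) simp
    then have "vinner n d x \<le> 1"
      using ud dK by (simp add: vinner_mvmul vle_vconj_iff_vinner_le_one)
    moreover have "mvmul n A x i \<le> \<theta> * x i" if "i < n" for i
    proof -
      have "mvmul n A x i = mvmul n A (mvmul n K u) i"
        using xu by (intro mvmul_cong) simp
      also have "\<dots> \<le> \<theta> * mvmul n K u i"
        unfolding K_def using tr assms(3) that by (rule subeigen_mvmul_kstar)
      finally show ?thesis
        using xu that by simp
    qed
    ultimately show "vle n b x \<and> vinner n d x \<le> 1 \<and> (\<forall>i<n. mvmul n A x i \<le> \<theta> * x i)"
      by blast
  qed
  finally show ?thesis
    by (simp only: K_def b_def[abs_def] d_def[abs_def])
qed

lemma kstar_bounds_consistent: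
  fixes A :: "nat \<Rightarrow> nat \<Rightarrow> 'a::idem_semifield"
  assumes "1 \<le> n" "regular n h" "\<theta> \<noteq> 0" "opt_value n A p q r g h \<le> \<theta>" "vinner n (vconj h) g \<le> 1"
  shows "vle n (\<lambda>i. inverse \<theta> * p i + g i)
    (vconj (vmmul n (\<lambda>i. inverse \<theta> * vconj q i + vconj h i) (kstar n (smul (inverse \<theta>) A))))"
proof -
  define K where "K = kstar n (smul (inverse \<theta>) A)"
  define b where "b = (\<lambda>i. inverse \<theta> * p i + g i)"
  define d where "d = (\<lambda>i. inverse \<theta> * vconj q i + vconj h i)"
  have "vinner n d (mvmul n (mpow n A k) b) \<le> \<theta> ^ k" if "k < n" for k
  proof -
    have "vinner n (vconj h) (mvmul n (mpow n A k) g) \<le> \<theta> ^ k"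
    proof (cases "k = 0")
      case True
      have "vinner n (vconj h) (mvmul n (mpow n A 0) g) = vinner n (vconj h) g"
        by (rule vinner_cong) (simp add: mvmul_idm)
      with True assms(5) show ?thesis by simp
    qed (use assms(4) \<open>k < n\<close> in \<open>simp add: opt_value_le_iff\<close>)
    moreover have "vinner n (vconj q) (mvmul n (mpow n A k) g) \<le> \<theta> * \<theta> ^ k"
      "vinner n (vconj h) (mvmul n (mpow n A k) p) \<le> \<theta> * \<theta> ^ k"
      "vinner n (vconj q) (mvmul n (mpow n A k) p) \<le> \<theta> * (\<theta> * \<theta> ^ k)"
      using assms(4) \<open>k < n\<close> by (simp_all add: opt_value_le_iff power_add power2_eq_square mult_ac)
    ultimately show ?thesis
      using assms(3)
      by (simp add: b_def d_def mvmul_add mvmul_scale vinner_add_left vinner_add_right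
          vinner_scale_left vinner_scale_right add_le_iff inverse_mult_le_iff)
  qed
  moreover have "mvmul n K b = (\<lambda>i. \<Sum>k<n. inverse \<theta> ^ k * mvmul n (mpow n A k) b i)"
    by (rule ext) (simp add: K_def mvmul_kstar mvmul_mpow_smul)
  then have "vinner n d (mvmul n K b) = (\<Sum>k<n. inverse \<theta> ^ k * vinner n d (mvmul n (mpow n A k) b))"
    by (simp add: vinner_sum_right vinner_scale_right)
  ultimately have "vinner n d (mvmul n K b) \<le> 1"
    using assms(3) by (simp add: sum_le_iff inverse_power_mult_le_one_iff)
  moreover have "regular n (vmmul n d K)"
    unfolding K_def d_def using assms(1,2) by (intro regular_vmmul_kstar regular_add_right regular_vconj)
  ultimately have "vle n b (vconj (vmmul n d K))"
    by (simp add: vinner_mvmul vle_vconj_iff_vinner_le_one)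
  then show ?thesis
    by (simp only: K_def b_def d_def)
qed

theorem corollary1:
  fixes A :: "nat \<Rightarrow> nat \<Rightarrow> 'a::idem_semifield"
    and p g q h :: "nat \<Rightarrow> 'a" and r :: 'a and n :: nat
  assumes "n \<ge> 1"
    and "regular n q" and "regular n h"
    and "vinner n (vconj h) g \<le> 1"
    and "spec_rad n A + rt 2 (vinner n (vconj q) p) + r > 0"
  defines "\<theta> \<equiv> spec_rad n A
      + (\<Sum>k\<in>{1..<n}. rt k (vinner n (vconj h) (mvmul n (mpow n A k) g)))
      + (\<Sum>k<n. rt (k + 1) (vinner n (vconj q) (mvmul n (mpow n A k) g)
                              + vinner n (vconj h) (mvmul n (mpow n A k) p)))
      + (\<Sum>k<n. rt (k + 2) (vinner n (vconj q) (mvmul n (mpow n A k) p)))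
      + r"
  shows "(\<exists>x. regular n x \<and> vle n g x \<and> vle n x h \<and> objf n A p q r x = \<theta>)
    \<and> (\<forall>x. regular n x \<and> vle n g x \<and> vle n x h \<longrightarrow> \<theta> \<le> objf n A p q r x)
    \<and> (\<forall>x. regular n x \<longrightarrow>
         ((vle n g x \<and> vle n x h \<and> objf n A p q r x = \<theta>) \<longleftrightarrow>
          (\<exists>u. vle n (\<lambda>i. inverse \<theta> * p i + g i) u
             \<and> vle n u (vconj (vmmul n (\<lambda>i. inverse \<theta> * vconj q i + vconj h i)
                                       (kstar n (smul (inverse \<theta>) A))))
             \<and> (\<forall>i<n. x i = mvmul n (kstar n (smul (inverse \<theta>) A)) u i))))"
proof -
  have opt: "\<theta> = opt_value n A p q r g h"
    unfolding \<theta>_def opt_value_def ..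
  have "\<theta> \<noteq> 0"
    using spec_rad_le_opt_value[OF assms(1), of A q p r g h] assms(5) opt by auto
  have "opt_value n A p q r g h \<le> \<theta>"
    by (simp add: opt)
  note sublevel = sublevel_set_eq_kstar_image[OF assms(1,3) \<open>\<theta> \<noteq> 0\<close> this]
    and consistent = kstar_bounds_consistent[OF assms(1,3) \<open>\<theta> \<noteq> 0\<close> this assms(4)]
  have minimal: "\<theta> \<le> objf n A p q r x" if "regular n x" "vle n g x" "vle n x h" for x
    using opt_value_le_objf[OF assms(3) that, of A p q r] by (simp add: opt)
  define u where "u = vconj (vmmul n (\<lambda>i. inverse \<theta> * vconj q i + vconj h i) (kstar n (smul (inverse \<theta>) A)))"
  have "regular n u"
    unfolding u_def using assms(1,3) by (intro regular_vconj regular_vmmul_kstar regular_add_right)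
  with assms(1) have "regular n (mvmul n (kstar n (smul (inverse \<theta>) A)) u)"
    by (rule regular_mvmul_kstar)
  then have attained: "\<exists>x. regular n x \<and> vle n g x \<and> vle n x h \<and> objf n A p q r x \<le> \<theta>"
    using sublevel consistent unfolding u_def[symmetric] vle_def by blast
  have "(vle n g x \<and> vle n x h \<and> objf n A p q r x = \<theta>) \<longleftrightarrow>
      (vle n g x \<and> vle n x h \<and> objf n A p q r x \<le> \<theta>)" if "regular n x" for x
    using minimal[OF that] by (auto intro: order.antisym)
  then show ?thesis
    using attained minimal sublevel by blast
qed

end
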